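(* Let $n\ge1$ be odd and $m\ge 2$ be even. Then every $\mathbf{v}\in\mathbb{Z}_m^n$ that has a predecessor has exactly two predecessors. Moreover, if $(x_1,\dots,x_n)$ is one predecessor of $\mathbf{v}$, then the other is $(\tfrac m2+x_1,\tfrac m2+x_2,\dots,\tfrac m2+x_n)$ (entries mod $m$).
   Context: The Ducci function $D:\mathbb{Z}_m^n\to\mathbb{Z}_m^n$ is $D(x_1,\dots,x_n)=(x_1+x_2,\,x_2+x_3,\,\dots,\,x_{n-1}+x_n,\,x_n+x_1)$, entries mod $m$. A predecessor of $\mathbf{v}$ is any $\mathbf{w}\in\mathbb{Z}_m^n$ with $D(\mathbf{w})=\mathbf{v}$. *)

theory Defs
  imports Main
begin

definition Zmn :: "int \<Rightarrow> nat \<Rightarrow> int list set" where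
  "Zmn m n = {xs. length xs = n \<and> (\<forall>x\<in>set xs. 0 \<le> x \<and> x < m)}"

definition ducci :: "int \<Rightarrow> int list \<Rightarrow> int list" where
  "ducci m xs = map (\<lambda>i. (xs ! i + xs ! ((i + 1) mod length xs)) mod m) [0..<length xs]"

definition predecessors :: "int \<Rightarrow> nat \<Rightarrow> int list \<Rightarrow> int list set" where
  "predecessors m n v = {w \<in> Zmn m n. ducci m w = v}"

end

(* If u and w are predecessors of the same vector, the differences d_i = u_i - w_i satisfy
   d_i + d_(i+1) = 0 (mod m) cyclically, so they alternate in sign. Around a cycle of odd
   length the signs clash: all d_i are congruent to one c with 2c = 0 (mod m), and for even m
   this leaves c = 0 or c = m/2. Conversely adding m/2 to every entry preserves D, because
   the two halves add up to m in every sum. *)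

theory Submission
  imports Defs "HOL-Number_Theory.Cong"
begin

lemma length_ducci [simp]: "length (ducci m xs) = length xs"
  by (simp add: ducci_def)

lemma ducci_nth:
  assumes "i < length xs"
  shows "ducci m xs ! i = (xs ! i + xs ! ((i + 1) mod length xs)) mod m"
  using assms by (simp add: ducci_def)

definition add_half :: "int \<Rightarrow> int list \<Rightarrow> int list" where
  "add_half m w = map (\<lambda>x. (m div 2 + x) mod m) w"

lemma add_half_in_Zmn:
  assumes "m > 0" and "length w = n"
  shows "add_half m w \<in> Zmn m n"
  using assms by (auto simp: add_half_def Zmn_def)

lemma ducci_add_half:
  assumes "even m"
  shows "ducci m (add_half m w) = ducci m w"
proof (rule nth_equalityI)
  fix i assume "i < length (ducci m (add_half m w))"
  then have i: "i < length w" by (simp add: add_half_def)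
  define j where "j = (i + 1) mod length w"
  have j: "j < length w" using i unfolding j_def by (intro mod_less_divisor) auto
  have "(m div 2 + w ! i) + (m div 2 + w ! j) = m + (w ! i + w ! j)"
    using assms by simp
  then have "((m div 2 + w ! i) mod m + (m div 2 + w ! j) mod m) mod m
      = (w ! i + w ! j) mod m"
    by (simp add: mod_add_eq)
  then show "ducci m (add_half m w) ! i = ducci m w ! i"
    using i j by (simp add: ducci_nth add_half_def j_def)
qed (simp add: add_half_def)

lemma add_half_neq:
  assumes "m \<ge> 2" and "w \<in> Zmn m n" and "n \<ge> 1"
  shows "add_half m w \<noteq> w"
proof
  assume eq: "add_half m w = w"
  have w0: "0 \<le> w ! 0" "w ! 0 < m"
    using assms by (auto simp: Zmn_def)
  have "(m div 2 + w ! 0) mod m = w ! 0"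
    using arg_cong[OF eq, of "\<lambda>xs. xs ! 0"] assms by (simp add: add_half_def Zmn_def)
  then have "(m div 2 + w ! 0) mod m = w ! 0 mod m"
    using w0 by simp
  then have "m dvd (m div 2 + w ! 0) - w ! 0"
    by (simp only: mod_eq_dvd_iff)
  then have "m dvd m div 2" by simp
  moreover have "0 < m div 2" "m div 2 < m" using assms(1) by auto
  ultimately show False using zdvd_imp_le by fastforce
qed

lemma ducci_eq_imp_cong:
  assumes "ducci m u = ducci m w" and "length u = length w" and "i < length w"
  shows "[u ! i + u ! ((i + 1) mod length w) = w ! i + w ! ((i + 1) mod length w)] (mod m)"
  using arg_cong[OF assms(1), of "\<lambda>xs. xs ! i"] assms(2,3)
  by (simp add: ducci_nth cong_def)

lemma cong_alternating_sign:
  fixes d :: "nat \<Rightarrow> int"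
  assumes step: "\<And>i. Suc i < n \<Longrightarrow> [d i + d (Suc i) = 0] (mod m)" and "i < n"
  shows "[d i = (-1) ^ i * d 0] (mod m)"
  using \<open>i < n\<close>
proof (induction i)
  case (Suc i)
  have "[d (Suc i) = (d i + d (Suc i)) - d i] (mod m)" by simp
  also have "[(d i + d (Suc i)) - d i = 0 - (-1) ^ i * d 0] (mod m)"
    using step[OF Suc.prems] Suc by (intro cong_diff) auto
  finally show ?case by simp
qed simp

lemma cong_const_on_odd_cycle:
  fixes d :: "nat \<Rightarrow> int"
  assumes "odd n" and step: "\<And>i. i < n \<Longrightarrow> [d i + d ((i + 1) mod n) = 0] (mod m)"
  shows "[2 * d 0 = 0] (mod m)" and "\<And>i. i < n \<Longrightarrow> [d i = d 0] (mod m)"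
proof -
  have alt: "[d i = (-1) ^ i * d 0] (mod m)" if "i < n" for i
  proof (rule cong_alternating_sign[OF _ that])
    fix j assume "Suc j < n"
    then show "[d j + d (Suc j) = 0] (mod m)" using step[of j] by simp
  qed
  have n: "n \<ge> 1" "even (n - 1)" using \<open>odd n\<close> by (auto simp: Suc_le_eq odd_pos)
  have "[d 0 = d (n - 1)] (mod m)"
    using alt[of "n - 1"] n by (simp add: cong_sym)
  then have "[d 0 + d 0 = d (n - 1) + d 0] (mod m)"
    by (rule cong_add) simp
  then have "[2 * d 0 = d (n - 1) + d 0] (mod m)"
    unfolding mult_2 .
  also have "[d (n - 1) + d 0 = 0] (mod m)"
    using step[of "n - 1"] n by simp
  finally show zero: "[2 * d 0 = 0] (mod m)" .
  have neg: "[- d 0 = d 0] (mod m)"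
    using cong_diff[OF cong_refl[of "d 0"] zero] by simp
  show "[d i = d 0] (mod m)" if "i < n" for i
    using alt[OF that] neg by (cases "even i") (auto elim: cong_trans)
qed

lemma ducci_eq_imp_cong_shift:
  assumes "ducci m u = ducci m w" and "length u = length w" and "odd (length w)"
  obtains c where "[2 * c = 0] (mod m)" and "\<And>i. i < length w \<Longrightarrow> [u ! i = w ! i + c] (mod m)"
proof -
  define d where "d i = u ! i - w ! i" for i
  have "[d i + d ((i + 1) mod length w) = 0] (mod m)" if "i < length w" for i
    using ducci_eq_imp_cong[OF assms(1,2) that]
    by (simp add: d_def cong_diff_iff_cong_0 algebra_simps)
  note const = cong_const_on_odd_cycle[of "length w" d m, OF assms(3) this]
  show thesis
  proof
    show "[2 * d 0 = 0] (mod m)" by (rule const(1))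
    fix i assume "i < length w"
    then have "[w ! i + d i = w ! i + d 0] (mod m)"
      using const(2) by (simp add: cong_add_lcancel)
    then show "[u ! i = w ! i + d 0] (mod m)" by (simp add: d_def)
  qed
qed

lemma cong_double_zero_cases:
  fixes c k :: int
  assumes "[2 * c = 0] (mod 2 * k)"
  shows "[c = 0] (mod 2 * k) \<or> [c = k] (mod 2 * k)"
proof -
  obtain q where q: "c = k * q"
    using assms by (auto simp: cong_0_iff)
  show ?thesis
  proof (cases "even q")
    case True
    then show ?thesis using q by (auto simp: cong_0_iff)
  next
    case False
    then obtain r where "q = 2 * r + 1" by (auto elim: oddE)
    then have "c - k = 2 * k * r" using q by (simp add: algebra_simps)
    then show ?thesis by (simp add: cong_iff_dvd_diff)
  qed
qed

lemma ducci_eq_imp_eq_or_add_half: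
  assumes "odd n" and "even m" and "m \<ge> 2"
    and u: "u \<in> Zmn m n" and w: "w \<in> Zmn m n" and eq: "ducci m u = ducci m w"
  shows "u = w \<or> u = add_half m w"
proof -
  have len: "length u = n" "length w = n" using u w by (auto simp: Zmn_def)
  have range: "0 \<le> xs ! i" "xs ! i < m" if "xs \<in> Zmn m n" "i < n" for xs i
    using that by (auto simp: Zmn_def)
  obtain c where c: "[2 * c = 0] (mod m)" and shift: "\<And>i. i < n \<Longrightarrow> [u ! i = w ! i + c] (mod m)"
    using ducci_eq_imp_cong_shift[OF eq] len \<open>odd n\<close> by auto
  have "[c = 0] (mod m) \<or> [c = m div 2] (mod m)"
    using cong_double_zero_cases[of c "m div 2"] c \<open>even m\<close> by simp
  then show ?thesis
  proof
    assume c0: "[c = 0] (mod m)"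
    have "u ! i = w ! i" if "i < n" for i
    proof (rule cong_less_imp_eq_int)
      show "[u ! i = w ! i] (mod m)"
        using cong_trans[OF shift[OF that] cong_add[OF cong_refl c0]] by simp
    qed (use that range[OF u] range[OF w] in auto)
    then show ?thesis using len by (auto intro: nth_equalityI)
  next
    assume c_half: "[c = m div 2] (mod m)"
    have "u ! i = (m div 2 + w ! i) mod m" if "i < n" for i
    proof (rule cong_less_imp_eq_int)
      show "[u ! i = (m div 2 + w ! i) mod m] (mod m)"
        using cong_trans[OF shift[OF that] cong_add[OF cong_refl c_half]] by (simp add: add.commute)
    qed (use that range[OF u] \<open>m \<ge> 2\<close> in auto)
    then show ?thesis using len by (auto intro: nth_equalityI simp: add_half_def)
  qed
qed

theorem theorem2p1:
  fixes n :: nat and m :: int and v w :: "int list"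
  assumes "n \<ge> 1" and "odd n" and "m \<ge> 2" and "even m"
    and "v \<in> Zmn m n" and "w \<in> predecessors m n v"
  shows "card (predecessors m n v) = 2
    \<and> predecessors m n v = {w, map (\<lambda>x. (m div 2 + x) mod m) w}"
proof -
  have w: "w \<in> Zmn m n" and v: "ducci m w = v"
    using assms(6) by (auto simp: predecessors_def)
  have "add_half m w \<in> Zmn m n"
    using w assms(3) by (intro add_half_in_Zmn) (auto simp: Zmn_def)
  then have "predecessors m n v = {w, add_half m w}"
    using ducci_eq_imp_eq_or_add_half[OF assms(2,4,3) _ w] ducci_add_half[OF assms(4)] w v
    by (auto simp: predecessors_def)
  moreover have "add_half m w \<noteq> w"
    using add_half_neq assms(1,3) w by blast
  ultimately show ?thesis by (simp add: add_half_def)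
qed

end
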